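(* Let $Y$ be a mean zero random variable with variance $\sigma^2\in(0,\infty)$ and moment generating function $m(s)=\mathbb{E}[e^{sY}]$, and let $Y^*$, defined on the same probability space, have the $Y$-zero biased distribution. If $Y^*-Y\le c$ almost surely for some $c>0$, and $\theta>0$ is such that $m(\theta)$ is finite, then $$m(\theta)\le \exp\left(\frac{\sigma^2}{c^2}\left(e^{c\theta}(c\theta-1)+1\right)\right).$$
   Context: Zero bias distribution: for a mean zero random variable $Y$ with finite positive variance $\sigma^2$, a random variable $Y^*$ is said to have the $Y$-zero biased distribution if $\mathbb{E}[Yf(Y)]=\sigma^2\mathbb{E}[f'(Y^* )]$ for all absolutely continuous functions $f$ for which the expectation of either side exists. *)

theory Defs
  imports "HOL-Probability.Probability"
begin

definition abs_continuous_on :: "real set \<Rightarrow> (real \<Rightarrow> real) \<Rightarrow> bool" where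
  "abs_continuous_on S f \<longleftrightarrow>
     (\<forall>\<epsilon>>0. \<exists>\<delta>>0. \<forall>(n::nat) (a::nat \<Rightarrow> real) (b::nat \<Rightarrow> real).
        (\<forall>i<n. a i \<le> b i \<and> {a i..b i} \<subseteq> S) \<and>
        disjoint_family_on (\<lambda>i. {a i<..<b i}) {..<n} \<and>
        (\<Sum>i<n. b i - a i) < \<delta>
        \<longrightarrow> (\<Sum>i<n. \<bar>f (b i) - f (a i)\<bar>) < \<epsilon>)"

definition abs_continuous :: "(real \<Rightarrow> real) \<Rightarrow> bool" where
  "abs_continuous f \<longleftrightarrow> (\<forall>a b. abs_continuous_on {a..b} f)"

definition zero_biased :: "'a measure \<Rightarrow> real \<Rightarrow> ('a \<Rightarrow> real) \<Rightarrow> ('a \<Rightarrow> real) \<Rightarrow> bool" where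
  "zero_biased M \<sigma>2 Y Ys \<longleftrightarrow>
     (\<forall>f f'. abs_continuous f \<and> f' \<in> borel_measurable borel \<and>
        (AE x in lborel. (f has_real_derivative f' x) (at x)) \<longrightarrow>
        (integrable M (\<lambda>\<omega>. Y \<omega> * f (Y \<omega>)) \<or> integrable M (\<lambda>\<omega>. f' (Ys \<omega>))) \<longrightarrow>
        (integrable M (\<lambda>\<omega>. Y \<omega> * f (Y \<omega>)) \<and> integrable M (\<lambda>\<omega>. f' (Ys \<omega>)) \<and>
         (\<integral>\<omega>. Y \<omega> * f (Y \<omega>) \<partial>M) = \<sigma>2 * (\<integral>\<omega>. f' (Ys \<omega>) \<partial>M)))"

end

theory Submission
  imports Defs
begin

text \<open>Write \<open>m(s) = E[exp (s Y)]\<close>. On \<open>[0, \<theta>]\<close>, \<open>m\<close> is differentiable with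
  \<open>m'(s) = E[Y exp (s Y)]\<close>, which the zero bias identity for \<open>f(x) = exp (s x)\<close> rewrites as
  \<open>\<sigma>\<^sup>2 s E[exp (s Y\<^sup>*)]\<close>. Since \<open>Y\<^sup>* \<le> Y + c\<close>, this is at most \<open>\<sigma>\<^sup>2 s exp (c s) m(s)\<close>;
  integrating the differential inequality \<open>(log m)' \<le> \<sigma>\<^sup>2 s exp (c s)\<close> from \<open>m(0) = 1\<close> gives
  the bound.\<close>

lemma abs_continuous_on_if_lipschitz_on:
  assumes "L-lipschitz_on S f"
  shows "abs_continuous_on S f"
  unfolding abs_continuous_on_def
proof (intro allI impI)
  fix \<epsilon> :: real assume "\<epsilon> > 0"
  have L: "L \<ge> 0" using lipschitz_on_nonneg[OF assms] .
  show "\<exists>\<delta>>0. \<forall>(n::nat) a b. (\<forall>i<n. a i \<le> b i \<and> {a i..b i} \<subseteq> S) \<and>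
          disjoint_family_on (\<lambda>i. {a i<..<b i}) {..<n} \<and> (\<Sum>i<n. b i - a i) < \<delta>
          \<longrightarrow> (\<Sum>i<n. \<bar>f (b i) - f (a i)\<bar>) < \<epsilon>"
  proof (intro exI[of _ "\<epsilon> / (L + 1)"] conjI allI impI)
    show "\<epsilon> / (L + 1) > 0" using \<open>\<epsilon> > 0\<close> L by simp
    fix n :: nat and a b :: "nat \<Rightarrow> real"
    assume H: "(\<forall>i<n. a i \<le> b i \<and> {a i..b i} \<subseteq> S) \<and>
        disjoint_family_on (\<lambda>i. {a i<..<b i}) {..<n} \<and> (\<Sum>i<n. b i - a i) < \<epsilon> / (L + 1)"
    have "(\<Sum>i<n. \<bar>f (b i) - f (a i)\<bar>) \<le> (\<Sum>i<n. L * (b i - a i))"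
    proof (rule sum_mono)
      fix i assume "i \<in> {..<n}"
      with H have "a i \<le> b i" and "{a i..b i} \<subseteq> S" by auto
      then have "a i \<in> S" and "b i \<in> S" by auto
      with \<open>a i \<le> b i\<close> show "\<bar>f (b i) - f (a i)\<bar> \<le> L * (b i - a i)"
        using lipschitz_onD[OF assms, of "b i" "a i"] by (simp add: dist_real_def)
    qed
    also have "\<dots> \<le> (L + 1) * (\<Sum>i<n. b i - a i)"
      using H by (auto simp: sum_distrib_left intro!: sum_mono mult_right_mono)
    also have "\<dots> < \<epsilon>"
      using H L by (simp add: pos_less_divide_eq mult.commute)
    finally show "(\<Sum>i<n. \<bar>f (b i) - f (a i)\<bar>) < \<epsilon>" .
  qed
qed

lemma abs_continuous_if_continuous_derivative:
  assumes "\<And>x. (f has_real_derivative f' x) (at x)" and "continuous_on UNIV f'"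
  shows "abs_continuous f"
  unfolding abs_continuous_def
proof (intro allI)
  fix a b :: real
  have "bounded (f' ` {a..b})"
    by (intro compact_imp_bounded compact_continuous_image continuous_on_subset[OF assms(2)]) auto
  then obtain B where B: "\<And>x. x \<in> {a..b} \<Longrightarrow> norm (f' x) \<le> B"
    unfolding bounded_iff by blast
  have "\<bar>B\<bar>-lipschitz_on {a..b} f"
  proof (rule lipschitz_onI)
    fix x y assume "x \<in> {a..b}" "y \<in> {a..b}"
    then have "norm (f x - f y) \<le> B * norm (x - y)"
      using B by (intro field_differentiable_bound[where S="{a..b}" and f'=f'])
        (auto intro: has_field_derivative_at_within[OF assms(1)])
    then show "dist (f x) (f y) \<le> \<bar>B\<bar> * dist x y"
      by (smt (verit) dist_norm mult_right_mono norm_ge_zero)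
  qed simp
  then show "abs_continuous_on {a..b} f"
    by (rule abs_continuous_on_if_lipschitz_on)
qed

lemma zero_biased_exp:
  assumes "zero_biased M \<sigma>2 Y Ys" and "integrable M (\<lambda>\<omega>. exp (s * Ys \<omega>))"
  shows "integrable M (\<lambda>\<omega>. Y \<omega> * exp (s * Y \<omega>))"
    and "(\<integral>\<omega>. Y \<omega> * exp (s * Y \<omega>) \<partial>M) = \<sigma>2 * s * (\<integral>\<omega>. exp (s * Ys \<omega>) \<partial>M)"
proof -
  have der: "((\<lambda>x. exp (s * x)) has_real_derivative s * exp (s * x)) (at x)" for x
    by (auto intro!: derivative_eq_intros)
  have "abs_continuous (\<lambda>x. exp (s * x))"
    by (rule abs_continuous_if_continuous_derivative[OF der]) (intro continuous_intros)
  moreover have "(\<lambda>x. s * exp (s * x)) \<in> borel_measurable borel"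
    by measurable
  moreover have "integrable M (\<lambda>\<omega>. s * exp (s * Ys \<omega>))"
    using assms(2) by simp
  ultimately have "integrable M (\<lambda>\<omega>. Y \<omega> * exp (s * Y \<omega>)) \<and>
      (\<integral>\<omega>. Y \<omega> * exp (s * Y \<omega>) \<partial>M) = \<sigma>2 * (\<integral>\<omega>. s * exp (s * Ys \<omega>) \<partial>M)"
    using assms(1) der unfolding zero_biased_def by blast
  then show "integrable M (\<lambda>\<omega>. Y \<omega> * exp (s * Y \<omega>))"
    and "(\<integral>\<omega>. Y \<omega> * exp (s * Y \<omega>) \<partial>M) = \<sigma>2 * s * (\<integral>\<omega>. exp (s * Ys \<omega>) \<partial>M)"
    by simp_all
qed

lemma exp_moment_le_of_AE_le_add:
  fixes X Y :: "'a \<Rightarrow> real"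
  assumes "AE \<omega> in M. X \<omega> \<le> Y \<omega> + c" and "X \<in> borel_measurable M" and "s \<ge> 0"
    and "integrable M (\<lambda>\<omega>. exp (s * Y \<omega>))"
  shows "integrable M (\<lambda>\<omega>. exp (s * X \<omega>))"
    and "(\<integral>\<omega>. exp (s * X \<omega>) \<partial>M) \<le> exp (c * s) * (\<integral>\<omega>. exp (s * Y \<omega>) \<partial>M)"
proof -
  have le: "AE \<omega> in M. exp (s * X \<omega>) \<le> exp (c * s) * exp (s * Y \<omega>)"
    using assms(1)
  proof eventually_elim
    fix \<omega> assume "X \<omega> \<le> Y \<omega> + c"
    then have "s * X \<omega> \<le> s * (Y \<omega> + c)"
      using assms(3) by (rule mult_left_mono)
    then have "s * X \<omega> \<le> c * s + s * Y \<omega>"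
      by (simp add: algebra_simps)
    then show "exp (s * X \<omega>) \<le> exp (c * s) * exp (s * Y \<omega>)"
      by (simp flip: exp_add)
  qed
  show int: "integrable M (\<lambda>\<omega>. exp (s * X \<omega>))"
  proof (rule Bochner_Integration.integrable_bound[OF integrable_mult_right[OF assms(4)]])
    show "(\<lambda>\<omega>. exp (s * X \<omega>)) \<in> borel_measurable M"
      using assms(2) by measurable
    show "AE \<omega> in M. norm (exp (s * X \<omega>)) \<le> norm (exp (c * s) * exp (s * Y \<omega>))"
      using le by simp
  qed
  show "(\<integral>\<omega>. exp (s * X \<omega>) \<partial>M) \<le> exp (c * s) * (\<integral>\<omega>. exp (s * Y \<omega>) \<partial>M)"
    using integral_mono_AE[OF int integrable_mult_right[OF assms(4)] le] by simp
qed

lemma abs_mult_exp_le_endpoints: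
  fixes g y :: real
  assumes "a \<le> s" and "s \<le> b"
  shows "\<bar>g * exp (s * y)\<bar> \<le> \<bar>g * exp (a * y)\<bar> + \<bar>g * exp (b * y)\<bar>"
proof -
  have "exp (s * y) \<le> exp (a * y) + exp (b * y)"
  proof (cases "y \<ge> 0")
    case True
    then have "s * y \<le> b * y" using assms(2) by (simp add: mult_right_mono)
    then show ?thesis by (smt (verit) exp_gt_zero exp_le_cancel_iff)
  next
    case False
    then have "s * y \<le> a * y" using assms(1) by (simp add: mult_right_mono_neg)
    then show ?thesis by (smt (verit) exp_gt_zero exp_le_cancel_iff)
  qed
  then have "\<bar>g\<bar> * exp (s * y) \<le> \<bar>g\<bar> * (exp (a * y) + exp (b * y))"
    by (rule mult_left_mono) simp
  then show ?thesis by (simp add: abs_mult distrib_left)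
qed

lemma integrable_mult_exp_between:
  fixes Y g :: "'a \<Rightarrow> real"
  assumes "Y \<in> borel_measurable M" and "g \<in> borel_measurable M"
    and "integrable M (\<lambda>\<omega>. g \<omega> * exp (a * Y \<omega>))" and "integrable M (\<lambda>\<omega>. g \<omega> * exp (b * Y \<omega>))"
    and "a \<le> s" and "s \<le> b"
  shows "integrable M (\<lambda>\<omega>. g \<omega> * exp (s * Y \<omega>))"
proof (rule Bochner_Integration.integrable_bound)
  show "integrable M (\<lambda>\<omega>. \<bar>g \<omega> * exp (a * Y \<omega>)\<bar> + \<bar>g \<omega> * exp (b * Y \<omega>)\<bar>)"
    using assms(3,4) by simp
  show "(\<lambda>\<omega>. g \<omega> * exp (s * Y \<omega>)) \<in> borel_measurable M"
    using assms(1,2) by measurable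
  show "AE \<omega> in M. norm (g \<omega> * exp (s * Y \<omega>))
      \<le> norm (\<bar>g \<omega> * exp (a * Y \<omega>)\<bar> + \<bar>g \<omega> * exp (b * Y \<omega>)\<bar>)"
    using abs_mult_exp_le_endpoints[OF assms(5,6)] by (intro AE_I2) simp
qed

lemma continuous_on_integral_mult_exp:
  fixes Y g :: "'a \<Rightarrow> real"
  assumes "Y \<in> borel_measurable M" and "g \<in> borel_measurable M"
    and "integrable M (\<lambda>\<omega>. g \<omega> * exp (a * Y \<omega>))" and "integrable M (\<lambda>\<omega>. g \<omega> * exp (b * Y \<omega>))"
  shows "continuous_on {a..b} (\<lambda>s. \<integral>\<omega>. g \<omega> * exp (s * Y \<omega>) \<partial>M)"
proof (rule continuous_on_sequentiallyI)
  fix u :: "nat \<Rightarrow> real" and s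
  assume u: "\<forall>n. u n \<in> {a..b}" and "s \<in> {a..b}" and "u \<longlonglongrightarrow> s"
  show "(\<lambda>n. \<integral>\<omega>. g \<omega> * exp (u n * Y \<omega>) \<partial>M) \<longlonglongrightarrow> (\<integral>\<omega>. g \<omega> * exp (s * Y \<omega>) \<partial>M)"
  proof (rule integral_dominated_convergence
      [where w="\<lambda>\<omega>. \<bar>g \<omega> * exp (a * Y \<omega>)\<bar> + \<bar>g \<omega> * exp (b * Y \<omega>)\<bar>"])
    show "integrable M (\<lambda>\<omega>. \<bar>g \<omega> * exp (a * Y \<omega>)\<bar> + \<bar>g \<omega> * exp (b * Y \<omega>)\<bar>)"
      using assms(3,4) by simp
    show "(\<lambda>\<omega>. g \<omega> * exp (s * Y \<omega>)) \<in> borel_measurable M"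
      using assms(1,2) by measurable
    show "(\<lambda>\<omega>. g \<omega> * exp (u n * Y \<omega>)) \<in> borel_measurable M" for n
      using assms(1,2) by measurable
    show "AE \<omega> in M. (\<lambda>n. g \<omega> * exp (u n * Y \<omega>)) \<longlonglongrightarrow> g \<omega> * exp (s * Y \<omega>)"
      using \<open>u \<longlonglongrightarrow> s\<close> by (intro AE_I2 tendsto_mult_left tendsto_exp tendsto_mult_right)
    show "AE \<omega> in M. norm (g \<omega> * exp (u n * Y \<omega>))
        \<le> \<bar>g \<omega> * exp (a * Y \<omega>)\<bar> + \<bar>g \<omega> * exp (b * Y \<omega>)\<bar>" for n
    proof (rule AE_I2)
      fix \<omega>
      from u have "a \<le> u n" "u n \<le> b" by auto
      from abs_mult_exp_le_endpoints[OF this, of "g \<omega>" "Y \<omega>"]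
      show "norm (g \<omega> * exp (u n * Y \<omega>))
          \<le> \<bar>g \<omega> * exp (a * Y \<omega>)\<bar> + \<bar>g \<omega> * exp (b * Y \<omega>)\<bar>"
        by (simp only: real_norm_def)
    qed
  qed
qed

lemma integral_exp_mult_diff_ge:
  fixes Y :: "'a \<Rightarrow> real"
  assumes "integrable M (\<lambda>\<omega>. exp (s * Y \<omega>))" and "integrable M (\<lambda>\<omega>. exp (t * Y \<omega>))"
    and "integrable M (\<lambda>\<omega>. Y \<omega> * exp (s * Y \<omega>))"
  shows "(t - s) * (\<integral>\<omega>. Y \<omega> * exp (s * Y \<omega>) \<partial>M)
    \<le> (\<integral>\<omega>. exp (t * Y \<omega>) \<partial>M) - (\<integral>\<omega>. exp (s * Y \<omega>) \<partial>M)"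
proof -
  have "(\<integral>\<omega>. (t - s) * (Y \<omega> * exp (s * Y \<omega>)) \<partial>M)
      \<le> (\<integral>\<omega>. exp (t * Y \<omega>) - exp (s * Y \<omega>) \<partial>M)"
  proof (rule integral_mono)
    show "integrable M (\<lambda>\<omega>. (t - s) * (Y \<omega> * exp (s * Y \<omega>)))"
      using assms(3) by (rule integrable_mult_right)
    show "integrable M (\<lambda>\<omega>. exp (t * Y \<omega>) - exp (s * Y \<omega>))"
      using assms(2,1) by (rule Bochner_Integration.integrable_diff)
    fix \<omega>
    have "exp (s * Y \<omega>) * (1 + (t - s) * Y \<omega>) \<le> exp (s * Y \<omega>) * exp ((t - s) * Y \<omega>)"
      using exp_ge_add_one_self by (rule mult_left_mono) simp
    also have "\<dots> = exp (t * Y \<omega>)"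
      by (simp add: left_diff_distrib flip: exp_add)
    finally show "(t - s) * (Y \<omega> * exp (s * Y \<omega>)) \<le> exp (t * Y \<omega>) - exp (s * Y \<omega>)"
      by (simp add: algebra_simps)
  qed
  then show ?thesis
    using assms(1,2) by simp
qed

lemma has_real_derivative_if_supporting_slopes:
  fixes m k :: "real \<Rightarrow> real"
  assumes "\<And>s t. s \<in> S \<Longrightarrow> t \<in> S \<Longrightarrow> (t - s) * k s \<le> m t - m s"
    and "continuous (at x within S) k" and "x \<in> S"
  shows "(m has_real_derivative k x) (at x within S)"
proof -
  \<comment> \<open>The hypothesis, used in both orders, traps the difference quotient between \<open>k x\<close> and \<open>k y\<close>.\<close>
  have slope: "\<bar>(m y - m x) / (y - x) - k x\<bar> \<le> \<bar>k y - k x\<bar>" if "y \<in> S" "y \<noteq> x" for y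
  proof -
    have lo: "(y - x) * k x \<le> m y - m x" and hi: "m y - m x \<le> (y - x) * k y"
      using assms(1)[OF assms(3) \<open>y \<in> S\<close>] assms(1)[OF \<open>y \<in> S\<close> assms(3)]
      by (simp_all add: algebra_simps)
    show ?thesis
    proof (cases "x < y")
      case True
      then have d: "y - x > 0" by simp
      have "k x \<le> (m y - m x) / (y - x)"
        using lo d by (simp add: pos_le_divide_eq algebra_simps)
      moreover have "(m y - m x) / (y - x) \<le> k y"
        using hi d by (simp add: pos_divide_le_eq algebra_simps)
      ultimately show ?thesis by linarith
    next
      case False
      with \<open>y \<noteq> x\<close> have d: "y - x < 0" by simp
      have "(m y - m x) / (y - x) \<le> k x"
        using lo d by (simp add: neg_divide_le_eq algebra_simps)
      moreover have "k y \<le> (m y - m x) / (y - x)"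
        using hi d by (simp add: neg_le_divide_eq algebra_simps)
      ultimately show ?thesis by linarith
    qed
  qed
  have lim: "((\<lambda>y. \<bar>k y - k x\<bar>) \<longlongrightarrow> 0) (at x within S)"
    using assms(2) unfolding continuous_within by (intro tendsto_rabs_zero LIM_zero)
  have ev: "eventually (\<lambda>y. norm ((m y - m x) / (y - x) - k x) \<le> \<bar>k y - k x\<bar>) (at x within S)"
    unfolding eventually_at_filter
  proof (rule always_eventually, intro allI impI)
    fix y assume "y \<noteq> x" "y \<in> S"
    with slope show "norm ((m y - m x) / (y - x) - k x) \<le> \<bar>k y - k x\<bar>"
      by (simp only: real_norm_def)
  qed
  have "((\<lambda>y. (m y - m x) / (y - x) - k x) \<longlongrightarrow> 0) (at x within S)"
    using ev lim by (rule Lim_null_comparison)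
  then show ?thesis
    unfolding has_field_derivative_iff by (rule LIM_zero_cancel)
qed

lemma has_real_derivative_exp_moment:
  fixes Y :: "'a \<Rightarrow> real"
  assumes "Y \<in> borel_measurable M"
    and "integrable M (\<lambda>\<omega>. exp (a * Y \<omega>))" and "integrable M (\<lambda>\<omega>. exp (b * Y \<omega>))"
    and "integrable M (\<lambda>\<omega>. Y \<omega> * exp (a * Y \<omega>))" and "integrable M (\<lambda>\<omega>. Y \<omega> * exp (b * Y \<omega>))"
    and "s \<in> {a..b}"
  shows "((\<lambda>s. \<integral>\<omega>. exp (s * Y \<omega>) \<partial>M) has_real_derivative (\<integral>\<omega>. Y \<omega> * exp (s * Y \<omega>) \<partial>M))
    (at s within {a..b})"
proof (rule has_real_derivative_if_supporting_slopes)
  have int_exp: "integrable M (\<lambda>\<omega>. exp (t * Y \<omega>))" if "t \<in> {a..b}" for t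
    using integrable_mult_exp_between[of Y M "\<lambda>_. 1" a b t] assms(1-3) that by simp
  have int_Y_exp: "integrable M (\<lambda>\<omega>. Y \<omega> * exp (t * Y \<omega>))" if "t \<in> {a..b}" for t
    using integrable_mult_exp_between[of Y M Y a b t] assms(1,4,5) that by simp
  show "(u - t) * (\<integral>\<omega>. Y \<omega> * exp (t * Y \<omega>) \<partial>M)
      \<le> (\<integral>\<omega>. exp (u * Y \<omega>) \<partial>M) - (\<integral>\<omega>. exp (t * Y \<omega>) \<partial>M)"
    if "t \<in> {a..b}" "u \<in> {a..b}" for t u
    using that by (intro integral_exp_mult_diff_ge int_exp int_Y_exp)
  show "continuous (at s within {a..b}) (\<lambda>s. \<integral>\<omega>. Y \<omega> * exp (s * Y \<omega>) \<partial>M)"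
    using continuous_on_integral_mult_exp[OF assms(1,1,4,5)] assms(6)
    by (simp add: continuous_on_eq_continuous_within)
qed (fact assms(6))

lemma le_mult_exp_diff_if_deriv_le_mult:
  fixes f f' G g :: "real \<Rightarrow> real"
  assumes "a \<le> b"
    and "\<And>t. t \<in> {a..b} \<Longrightarrow> (f has_real_derivative f' t) (at t within {a..b})"
    and "\<And>t. t \<in> {a..b} \<Longrightarrow> (G has_real_derivative g t) (at t within {a..b})"
    and "\<And>t. a < t \<Longrightarrow> t < b \<Longrightarrow> f' t \<le> g t * f t"
  shows "f b \<le> f a * exp (G b - G a)"
proof -
  define F where "F t = f t * exp (- G t)" for t
  have F_deriv: "(F has_real_derivative (f' t - g t * f t) * exp (- G t)) (at t within {a..b})"
    if "t \<in> {a..b}" for t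
    unfolding F_def using assms(2,3)[OF that]
    by (auto intro!: derivative_eq_intros simp: algebra_simps)
  have "F b \<le> F a"
  proof (rule DERIV_nonpos_imp_decreasing_open[OF assms(1)])
    show "continuous_on {a..b} F"
      using F_deriv DERIV_continuous continuous_on_eq_continuous_within by blast
    fix t assume "a < t" "t < b"
    then have "(F has_real_derivative (f' t - g t * f t) * exp (- G t)) (at t)"
      using F_deriv[of t] by (simp add: at_within_Icc_at)
    moreover have "(f' t - g t * f t) * exp (- G t) \<le> 0"
      using assms(4)[OF \<open>a < t\<close> \<open>t < b\<close>] by (simp add: mult_nonpos_nonneg)
    ultimately show "\<exists>y. (F has_real_derivative y) (at t) \<and> y \<le> 0" by blast
  qed
  then show ?thesis
    by (simp add: F_def exp_minus exp_diff field_simps)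
qed

theorem mainTheorem6:
  fixes M :: "'a measure" and Y Ys :: "'a \<Rightarrow> real" and \<sigma>2 c \<theta> :: real
  assumes "prob_space M"
    and "Y \<in> borel_measurable M" and "Ys \<in> borel_measurable M"
    and "integrable M Y" and "(\<integral>\<omega>. Y \<omega> \<partial>M) = 0"
    and "integrable M (\<lambda>\<omega>. (Y \<omega>)\<^sup>2)" and "\<sigma>2 = (\<integral>\<omega>. (Y \<omega>)\<^sup>2 \<partial>M)" and "\<sigma>2 > 0"
    and "zero_biased M \<sigma>2 Y Ys"
    and "c > 0" and "AE \<omega> in M. Ys \<omega> - Y \<omega> \<le> c"
    and "\<theta> > 0" and "integrable M (\<lambda>\<omega>. exp (\<theta> * Y \<omega>))"
  shows "(\<integral>\<omega>. exp (\<theta> * Y \<omega>) \<partial>M)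
           \<le> exp (\<sigma>2 / c\<^sup>2 * (exp (c * \<theta>) * (c * \<theta> - 1) + 1))"
proof -
  interpret prob_space M by fact
  have AE_Ys: "AE \<omega> in M. Ys \<omega> \<le> Y \<omega> + c"
    using assms(11) by (auto elim: AE_mp)
  define m where "m s = (\<integral>\<omega>. exp (s * Y \<omega>) \<partial>M)" for s
  define k where "k s = (\<integral>\<omega>. Y \<omega> * exp (s * Y \<omega>) \<partial>M)" for s
  define G where "G t = \<sigma>2 / c\<^sup>2 * (exp (c * t) * (c * t - 1) + 1)" for t
  have int_exp: "integrable M (\<lambda>\<omega>. exp (s * Y \<omega>))" if "s \<in> {0..\<theta>}" for s
    using integrable_mult_exp_between[of Y M "\<lambda>_. 1" 0 \<theta> s] assms(2,13) that by simp
  have int_exp_Ys: "integrable M (\<lambda>\<omega>. exp (s * Ys \<omega>))"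
    and exp_Ys_le: "(\<integral>\<omega>. exp (s * Ys \<omega>) \<partial>M) \<le> exp (c * s) * m s" if "s \<in> {0..\<theta>}" for s
    using exp_moment_le_of_AE_le_add[OF AE_Ys assms(3) _ int_exp] that by (auto simp: m_def)
  have k_eq: "k s = \<sigma>2 * s * (\<integral>\<omega>. exp (s * Ys \<omega>) \<partial>M)" if "s \<in> {0..\<theta>}" for s
    using zero_biased_exp(2)[OF assms(9) int_exp_Ys[OF that]] by (simp add: k_def)
  have m_deriv: "(m has_real_derivative k s) (at s within {0..\<theta>})" if "s \<in> {0..\<theta>}" for s
    unfolding m_def k_def
    using assms(2,4,13) int_exp zero_biased_exp(1)[OF assms(9) int_exp_Ys] that
    by (intro has_real_derivative_exp_moment) auto
  have G_deriv: "(G has_real_derivative \<sigma>2 * t * exp (c * t)) (at t within {0..\<theta>})" for t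
    unfolding G_def using \<open>c > 0\<close>
    by (auto intro!: derivative_eq_intros simp: field_simps power2_eq_square)
  have "k s \<le> \<sigma>2 * s * exp (c * s) * m s" if "s \<in> {0..\<theta>}" for s
    using mult_left_mono[OF exp_Ys_le[OF that], of "\<sigma>2 * s"] \<open>\<sigma>2 > 0\<close> that
    by (simp add: k_eq mult.assoc)
  then have "m \<theta> \<le> m 0 * exp (G \<theta> - G 0)"
    using \<open>\<theta> > 0\<close> m_deriv G_deriv by (intro le_mult_exp_diff_if_deriv_le_mult) auto
  then show ?thesis
    by (simp add: m_def G_def prob_space)
qed

end
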